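(* Let $n\ge3$, $0<1/b_n\le 1/c_n$, and let $V=(v_{ij})$ be a symmetric $n\times n$ matrix in $\mathcal L_n(1/b_n,1/c_n)$. Let $r\in\{1,\dots,n-1\}$ and let $V_{22}$ be the bottom-right $(n-r)\times(n-r)$ block of $V$. Let $S=\mathrm{diag}(1/v_{11},\dots,1/v_{nn})$ and $S_{22}=\mathrm{diag}(1/v_{r+1,r+1},\dots,1/v_{nn})$. Then $V$ and $V_{22}$ are invertible and $$\max\{\|V^{-1}-S\|_{\max},\ \|V_{22}^{-1}-S_{22}\|_{\max}\}\le\frac{2b_n^2}{c_n(n-1)^2}\Big(\frac{nb_n}{2(n-2)c_n}+\frac12\Big).$$
   Context: For $m,M>0$, $\mathcal L_n(m,M)$ is the class of $n\times n$ matrices $V=(v_{ij})$ with $v_{ii}=\sum_{j\ne i}v_{ij}$ for $i=1,\dots,n$ and $m\le v_{ij}\le M$ for all $i\ne j$. For a matrix $J$, $\|J\|_{\max}=\max_{i,j}|J_{ij}|$. *)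

theory Defs
  imports "Jordan_Normal_Form.Matrix"
begin

text \<open>Matrices are JNF matrices with 0-based indices 0..n-1 (paper: 1..n).\<close>

definition in_L :: "nat \<Rightarrow> real \<Rightarrow> real \<Rightarrow> real mat \<Rightarrow> bool" where
  "in_L n m M V \<longleftrightarrow> V \<in> carrier_mat n n
     \<and> (\<forall>i<n. V $$ (i,i) = (\<Sum>j\<in>{0..<n} - {i}. V $$ (i,j)))
     \<and> (\<forall>i<n. \<forall>j<n. i \<noteq> j \<longrightarrow> m \<le> V $$ (i,j) \<and> V $$ (i,j) \<le> M)"

definition max_norm :: "real mat \<Rightarrow> real" where
  "max_norm J = Max {\<bar>J $$ (i,j)\<bar> | i j. i < dim_row J \<and> j < dim_col J}"

definition mat_inv :: "real mat \<Rightarrow> real mat" where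
  "mat_inv A = (SOME B. inverts_mat A B \<and> inverts_mat B A)"

text \<open>Bottom-right block consisting of rows/columns r..n-1 (paper: r+1..n).\<close>
definition lower_block :: "nat \<Rightarrow> nat \<Rightarrow> real mat \<Rightarrow> real mat" where
  "lower_block n r V = mat (n - r) (n - r) (\<lambda>(i,j). V $$ (i + r, j + r))"

definition inv_diag :: "real mat \<Rightarrow> real mat" where
  "inv_diag A = mat (dim_row A) (dim_row A) (\<lambda>(i,j). if i = j then 1 / A $$ (i,i) else 0)"

end

theory Submission
  imports Defs "Jordan_Normal_Form.Determinant"
begin

text \<open>
  Let \<open>A\<close> be \<open>V\<close> or its lower block (the deleted columns only add slack to the diagonal) and split
  \<open>A = D + O\<close> with \<open>D\<close> diagonal. As \<open>O\<close> is symmetric,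
  \<open>x\<^sup>T O x + \<Sum>\<^sub>i (\<Sum>\<^sub>j o\<^sub>i\<^sub>j) x\<^sub>i\<^sup>2 = (\<Sum>\<^sub>i \<Sum>\<^sub>j o\<^sub>i\<^sub>j (x\<^sub>i + x\<^sub>j)\<^sup>2) / 2\<close>, and with \<open>o\<^sub>i\<^sub>j \<ge> m\<close> for \<open>i \<noteq> j\<close>
  diagonal dominance yields the coercivity \<open>x\<^sup>T A x \<ge> m (n - 2) |x|\<^sup>2\<close>; in particular \<open>A\<close> is
  invertible. Solving \<open>A G = G A = 1\<close> for the diagonal terms gives
  \<open>G - D\<^sup>-\<^sup>1 = D\<^sup>-\<^sup>1 (O G O - O) D\<^sup>-\<^sup>1\<close>, where \<open>D \<ge> (n - 1) m\<close>, \<open>|o\<^sub>i\<^sub>j| \<le> M\<close>, and coercivity bounds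
  the entries of \<open>O G O\<close> by \<open>n M\<^sup>2 / (m (n - 2))\<close>. Put \<open>m = 1/b\<close>, \<open>M = 1/c\<close>.
\<close>

definition offdiag :: "('a \<Rightarrow> 'a \<Rightarrow> real) \<Rightarrow> 'a \<Rightarrow> 'a \<Rightarrow> real" where
  "offdiag a i j = (if i = j then 0 else a i j)"

definition bilinear_form :: "'a set \<Rightarrow> ('a \<Rightarrow> 'a \<Rightarrow> real) \<Rightarrow> ('a \<Rightarrow> real) \<Rightarrow> ('a \<Rightarrow> real) \<Rightarrow> real" where
  "bilinear_form K a x y = (\<Sum>i\<in>K. \<Sum>j\<in>K. x i * a i j * y j)"

lemma sum_offdiag_row:
  assumes "finite K" "i \<in> K"
  shows "(\<Sum>j\<in>K. offdiag a i j * y j) = (\<Sum>j\<in>K. a i j * y j) - a i i * y i"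
proof -
  have "(\<Sum>j\<in>K. offdiag a i j * y j) = (\<Sum>j\<in>K. a i j * y j - (if j = i then a i i * y i else 0))"
    by (rule sum.cong) (auto simp: offdiag_def)
  then show ?thesis
    using assms by (simp add: sum_subtractf)
qed

lemma sum_offdiag_col:
  assumes "finite K" "j \<in> K"
  shows "(\<Sum>l\<in>K. y l * offdiag a l j) = (\<Sum>l\<in>K. y l * a l j) - y j * a j j"
proof -
  have "(\<Sum>l\<in>K. y l * offdiag a l j) = (\<Sum>l\<in>K. y l * a l j - (if l = j then y j * a j j else 0))"
    by (rule sum.cong) (auto simp: offdiag_def)
  then show ?thesis
    using assms by (simp add: sum_subtractf)
qed

lemma bilinear_form_commute:
  assumes "\<And>i j. i \<in> K \<Longrightarrow> j \<in> K \<Longrightarrow> a i j = a j i"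
  shows "bilinear_form K a x y = bilinear_form K a y x"
proof -
  have "bilinear_form K a x y = (\<Sum>j\<in>K. \<Sum>i\<in>K. x i * a i j * y j)"
    unfolding bilinear_form_def by (rule sum.swap)
  also have "\<dots> = bilinear_form K a y x"
    unfolding bilinear_form_def using assms by (intro sum.cong refl) (simp add: mult_ac)
  finally show ?thesis .
qed

lemma bilinear_form_abs_le:
  assumes sym: "\<And>i j. i \<in> K \<Longrightarrow> j \<in> K \<Longrightarrow> a i j = a j i"
    and psd: "\<And>z. 0 \<le> bilinear_form K a z z"
  shows "\<bar>bilinear_form K a x y\<bar> \<le> (bilinear_form K a x x + bilinear_form K a y y) / 2"
proof -
  have comm: "bilinear_form K a y x = bilinear_form K a x y"
    using sym by (rule bilinear_form_commute)
  have "bilinear_form K a (\<lambda>l. x l + y l) (\<lambda>l. x l + y l)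
      = bilinear_form K a x x + bilinear_form K a x y + bilinear_form K a y x + bilinear_form K a y y"
    unfolding bilinear_form_def by (simp add: algebra_simps sum.distrib)
  moreover have "bilinear_form K a (\<lambda>l. x l - y l) (\<lambda>l. x l - y l)
      = bilinear_form K a x x - bilinear_form K a x y - bilinear_form K a y x + bilinear_form K a y y"
    unfolding bilinear_form_def by (simp add: algebra_simps sum.distrib sum_subtractf)
  ultimately show ?thesis
    using psd[of "\<lambda>l. x l + y l"] psd[of "\<lambda>l. x l - y l"] comm by (simp add: abs_le_iff)
qed

lemma sum_square_pairs:
  fixes x :: "'a \<Rightarrow> real"
  shows "(\<Sum>i\<in>K. \<Sum>j\<in>K. (x i + x j)^2) = 2 * real (card K) * (\<Sum>i\<in>K. x i^2) + 2 * (\<Sum>i\<in>K. x i)^2"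
proof -
  have "(\<Sum>i\<in>K. \<Sum>j\<in>K. (x i + x j)^2)
      = (\<Sum>i\<in>K. \<Sum>j\<in>K. x i^2) + (\<Sum>i\<in>K. \<Sum>j\<in>K. x j^2) + 2 * (\<Sum>i\<in>K. \<Sum>j\<in>K. x i * x j)"
    by (simp add: power2_sum sum.distrib sum_distrib_left mult.assoc)
  moreover have "(\<Sum>i\<in>K. \<Sum>j\<in>K. x i^2) = real (card K) * (\<Sum>i\<in>K. x i^2)"
    by (simp add: sum_distrib_left)
  moreover have "(\<Sum>i\<in>K. \<Sum>j\<in>K. x i * x j) = (\<Sum>i\<in>K. x i)^2"
    by (simp add: sum_product power2_eq_square)
  ultimately show ?thesis
    by simp
qed

lemma symmetric_weighted_square_sum:
  fixes w :: "'a \<Rightarrow> 'a \<Rightarrow> real"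
  assumes "\<And>i j. i \<in> K \<Longrightarrow> j \<in> K \<Longrightarrow> w i j = w j i"
  shows "(\<Sum>i\<in>K. \<Sum>j\<in>K. w i j * (x i + x j)^2)
       = 2 * (\<Sum>i\<in>K. \<Sum>j\<in>K. w i j * x i^2) + 2 * (\<Sum>i\<in>K. \<Sum>j\<in>K. w i j * x i * x j)"
proof -
  have "(\<Sum>i\<in>K. \<Sum>j\<in>K. w i j * x j^2) = (\<Sum>j\<in>K. \<Sum>i\<in>K. w i j * x j^2)"
    by (rule sum.swap)
  also have "\<dots> = (\<Sum>i\<in>K. \<Sum>j\<in>K. w i j * x i^2)"
    using assms by (intro sum.cong refl) simp
  finally have "(\<Sum>i\<in>K. \<Sum>j\<in>K. w i j * x j^2) = (\<Sum>i\<in>K. \<Sum>j\<in>K. w i j * x i^2)" .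
  then show ?thesis
    by (simp add: power2_sum algebra_simps sum.distrib sum_distrib_left)
qed

lemma bilinear_form_split_diag:
  assumes K: "finite K"
  shows "bilinear_form K a x x = (\<Sum>i\<in>K. a i i * x i^2) + bilinear_form K (offdiag a) x x"
proof -
  have "(\<Sum>j\<in>K. x i * a i j * x j) = a i i * x i^2 + (\<Sum>j\<in>K. x i * offdiag a i j * x j)"
    if "i \<in> K" for i
  proof -
    have "(\<Sum>j\<in>K. x i * a i j * x j) = x i * (\<Sum>j\<in>K. a i j * x j)"
      by (simp add: sum_distrib_left mult.assoc)
    also have "\<dots> = x i * (a i i * x i + (\<Sum>j\<in>K. offdiag a i j * x j))"
      using sum_offdiag_row[OF K that, of a x] by simp
    also have "\<dots> = a i i * x i^2 + (\<Sum>j\<in>K. x i * offdiag a i j * x j)"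
      by (simp add: ring_distribs sum_distrib_left power2_eq_square mult_ac)
    finally show ?thesis .
  qed
  then show ?thesis
    unfolding bilinear_form_def by (simp add: sum.distrib[symmetric])
qed

lemma bilinear_form_ge_diag_dominant:
  fixes a :: "'a \<Rightarrow> 'a \<Rightarrow> real"
  assumes K: "finite K"
    and sym: "\<And>i j. i \<in> K \<Longrightarrow> j \<in> K \<Longrightarrow> a i j = a j i"
    and off: "\<And>i j. i \<in> K \<Longrightarrow> j \<in> K \<Longrightarrow> i \<noteq> j \<Longrightarrow> m \<le> a i j"
    and "0 \<le> m"
    and diag: "\<And>i. i \<in> K \<Longrightarrow> (\<Sum>j\<in>K - {i}. a i j) + d \<le> a i i"
  shows "(m * (real (card K) - 2) + d) * (\<Sum>i\<in>K. x i^2) \<le> bilinear_form K a x x"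
proof -
  let ?o = "offdiag a" and ?X = "\<Sum>i\<in>K. x i^2"
  note form = bilinear_form_split_diag[OF K, of a x]
  have "(\<Sum>i\<in>K. \<Sum>j\<in>K. ?o i j * x i^2) + d * ?X \<le> (\<Sum>i\<in>K. a i i * x i^2)"
  proof -
    have "(\<Sum>j\<in>K. ?o i j) + d \<le> a i i" if "i \<in> K" for i
      using diag[OF that] sum_offdiag_row[OF K that, of a "\<lambda>_. 1"] K that by (simp add: sum_diff1)
    then have "(\<Sum>i\<in>K. ((\<Sum>j\<in>K. ?o i j) + d) * x i^2) \<le> (\<Sum>i\<in>K. a i i * x i^2)"
      by (intro sum_mono mult_right_mono) auto
    then show ?thesis
      by (simp add: algebra_simps sum.distrib sum_distrib_left sum_distrib_right)
  qed
  moreover have "(\<Sum>i\<in>K. \<Sum>j\<in>K. ?o i j * x i^2) + bilinear_form K ?o x x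
      = (\<Sum>i\<in>K. \<Sum>j\<in>K. ?o i j * (x i + x j)^2) / 2"
  proof -
    have "bilinear_form K ?o x x = (\<Sum>i\<in>K. \<Sum>j\<in>K. ?o i j * x i * x j)"
      unfolding bilinear_form_def by (simp add: mult_ac)
    moreover have "?o i j = ?o j i" if "i \<in> K" "j \<in> K" for i j
      using sym[OF that] by (simp add: offdiag_def)
    ultimately show ?thesis
      using symmetric_weighted_square_sum[of K ?o x] by simp
  qed
  moreover have "m * (real (card K) - 2) * ?X \<le> (\<Sum>i\<in>K. \<Sum>j\<in>K. ?o i j * (x i + x j)^2) / 2"
  proof -
    have "m * (real (card K) - 2) * ?X \<le> (m * (\<Sum>i\<in>K. \<Sum>j\<in>K. (x i + x j)^2) - 4 * m * ?X) / 2"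
      using \<open>0 \<le> m\<close> by (simp add: sum_square_pairs algebra_simps)
    also have "\<dots> = (\<Sum>i\<in>K. \<Sum>j\<in>K. offdiag (\<lambda>_ _. m) i j * (x i + x j)^2) / 2"
      by (simp add: sum_offdiag_row[OF K] sum_subtractf sum_distrib_left power_mult_distrib mult_ac)
    also have "\<dots> \<le> (\<Sum>i\<in>K. \<Sum>j\<in>K. ?o i j * (x i + x j)^2) / 2"
      by (intro divide_right_mono sum_mono mult_right_mono) (auto simp: offdiag_def off)
    finally show ?thesis .
  qed
  ultimately show ?thesis
    unfolding form by (simp add: algebra_simps)
qed

lemma sum_right_inverse:
  fixes a g :: "'a \<Rightarrow> 'a \<Rightarrow> real"
  assumes K: "finite K" "l \<in> K"
    and right_inv: "\<And>i j. i \<in> K \<Longrightarrow> j \<in> K \<Longrightarrow> (\<Sum>t\<in>K. a i t * g t j) = (if i = j then 1 else 0)"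
  shows "(\<Sum>t\<in>K. a l t * (\<Sum>p\<in>K. g t p * u p)) = u l"
proof -
  have "(\<Sum>t\<in>K. a l t * (\<Sum>p\<in>K. g t p * u p)) = (\<Sum>t\<in>K. \<Sum>p\<in>K. a l t * g t p * u p)"
    by (simp add: sum_distrib_left mult.assoc)
  also have "\<dots> = (\<Sum>p\<in>K. (\<Sum>t\<in>K. a l t * g t p) * u p)"
    by (subst sum.swap) (simp add: sum_distrib_right)
  also have "\<dots> = (\<Sum>p\<in>K. if l = p then u p else 0)"
    using K by (intro sum.cong refl) (simp add: right_inv)
  also have "\<dots> = u l"
    using K by simp
  finally show ?thesis .
qed

lemma bilinear_form_inverse_le:
  fixes a g :: "'a \<Rightarrow> 'a \<Rightarrow> real"
  assumes K: "finite K"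
    and sym: "\<And>i j. i \<in> K \<Longrightarrow> j \<in> K \<Longrightarrow> a i j = a j i"
    and "0 < c" and coercive: "\<And>x. c * (\<Sum>i\<in>K. x i^2) \<le> bilinear_form K a x x"
    and right_inv: "\<And>i j. i \<in> K \<Longrightarrow> j \<in> K \<Longrightarrow> (\<Sum>t\<in>K. a i t * g t j) = (if i = j then 1 else 0)"
  shows "\<bar>bilinear_form K g u w\<bar> \<le> ((\<Sum>i\<in>K. u i^2) + (\<Sum>i\<in>K. w i^2)) / (2 * c)"
proof -
  define q where "q y = (\<lambda>l. \<Sum>p\<in>K. g l p * y p)" for y
  have form_q: "bilinear_form K a z (q y) = (\<Sum>l\<in>K. z l * y l)" for z y
    unfolding bilinear_form_def q_def
    by (intro sum.cong refl)
      (simp add: mult.assoc sum_distrib_left[symmetric] sum_right_inverse[OF K _ right_inv])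
  have diag: "bilinear_form K a (q y) (q y) \<le> (\<Sum>i\<in>K. y i^2) / c" for y
  proof -
    \<comment> \<open>\<open>q\<^sup>T A q = q\<^sup>T y \<le> |y|\<^sup>2/(2c) + c|q|\<^sup>2/2 \<le> |y|\<^sup>2/(2c) + q\<^sup>T A q/2\<close>\<close>
    have "(\<Sum>l\<in>K. q y l * y l) \<le> (\<Sum>l\<in>K. y l^2 / (2 * c) + c * q y l^2 / 2)"
    proof (rule sum_mono)
      fix l
      have "2 * c * (q y l * y l) \<le> y l^2 + c^2 * q y l^2"
        using sum_squares_ge_zero[of "y l - c * q y l" 0] by (simp add: power2_eq_square algebra_simps)
      then show "q y l * y l \<le> y l^2 / (2 * c) + c * q y l^2 / 2"
        using \<open>0 < c\<close> by (simp add: field_simps power2_eq_square)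
    qed
    also have "\<dots> = (\<Sum>l\<in>K. y l^2) / (2 * c) + c * (\<Sum>l\<in>K. q y l^2) / 2"
      by (simp add: sum.distrib sum_divide_distrib sum_distrib_left)
    finally have "bilinear_form K a (q y) (q y) \<le> (\<Sum>l\<in>K. y l^2) / (2 * c) + bilinear_form K a (q y) (q y) / 2"
      using form_q[of "q y" y] coercive[of "q y"] by simp
    then show ?thesis
      using \<open>0 < c\<close> by (simp add: field_simps)
  qed
  have "bilinear_form K g u w = (\<Sum>l\<in>K. (\<Sum>p\<in>K. g l p * w p) * u l)"
    unfolding bilinear_form_def by (simp add: sum_distrib_left sum_distrib_right mult_ac)
  also have "\<dots> = bilinear_form K a (q w) (q u)"
    using form_q[of "q w" u] by (simp add: q_def)
  also have "\<bar>\<dots>\<bar> \<le> (bilinear_form K a (q w) (q w) + bilinear_form K a (q u) (q u)) / 2"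
  proof (rule bilinear_form_abs_le[OF sym])
    show "0 \<le> bilinear_form K a z z" for z
      by (rule order_trans[OF mult_nonneg_nonneg coercive]) (use \<open>0 < c\<close> in \<open>auto intro: sum_nonneg\<close>)
  qed
  also have "\<dots> \<le> ((\<Sum>i\<in>K. w i^2) / c + (\<Sum>i\<in>K. u i^2) / c) / 2"
    using add_mono[OF diag[of w] diag[of u]] by (rule divide_right_mono) simp
  also have "\<dots> = ((\<Sum>i\<in>K. u i^2) + (\<Sum>i\<in>K. w i^2)) / (2 * c)"
    using \<open>0 < c\<close> by (simp add: field_simps)
  finally show ?thesis .
qed

lemma inverse_entry_perturbation:
  fixes a g :: "'a \<Rightarrow> 'a \<Rightarrow> real"
  assumes K: "finite K" "i \<in> K" "j \<in> K" and "a i i \<noteq> 0" "a j j \<noteq> 0"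
    and right_inv: "\<And>i j. i \<in> K \<Longrightarrow> j \<in> K \<Longrightarrow> (\<Sum>t\<in>K. a i t * g t j) = (if i = j then 1 else 0)"
    and left_inv: "\<And>i j. i \<in> K \<Longrightarrow> j \<in> K \<Longrightarrow> (\<Sum>t\<in>K. g i t * a t j) = (if i = j then 1 else 0)"
  shows "g i j - (if i = j then 1 / a i i else 0)
       = (bilinear_form K g (offdiag a i) (\<lambda>p. offdiag a p j) - offdiag a i j) / (a i i * a j j)"
proof -
  let ?Q = "bilinear_form K g (offdiag a i) (\<lambda>p. offdiag a p j)"
  define S where "S = (\<Sum>l\<in>K. offdiag a i l * g l j)"
  have row: "a i i * g i j + S = (if i = j then 1 else 0)"
    using sum_offdiag_row[OF K(1,2), of a "\<lambda>l. g l j"] right_inv[OF K(2,3)] by (simp add: S_def)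
  have col: "g l j = ((if l = j then 1 else 0) - (\<Sum>p\<in>K. g l p * offdiag a p j)) / a j j" if "l \<in> K" for l
    using sum_offdiag_col[OF K(1,3), of "g l" a] left_inv[OF that K(3)] \<open>a j j \<noteq> 0\<close>
    by (simp add: field_simps)
  have "S = (\<Sum>l\<in>K. offdiag a i l * (if l = j then 1 else 0)
             - (\<Sum>p\<in>K. offdiag a i l * g l p * offdiag a p j)) / a j j"
    unfolding S_def
    by (simp add: col sum_divide_distrib right_diff_distrib sum_distrib_left mult.assoc cong: sum.cong)
  also have "\<dots> = (offdiag a i j - ?Q) / a j j"
  proof -
    have "(\<Sum>l\<in>K. offdiag a i l * (if l = j then 1 else 0)) = offdiag a i j"
      using K by (simp add: if_distrib[of "(*) _"] cong: if_cong)
    then show ?thesis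
      by (simp add: sum_subtractf bilinear_form_def)
  qed
  finally have S_eq: "S = (offdiag a i j - ?Q) / a j j" .
  have "g i j = ((if i = j then 1 else 0) - S) / a i i"
    using row \<open>a i i \<noteq> 0\<close> by (simp add: field_simps)
  then show ?thesis
    unfolding S_eq using \<open>a i i \<noteq> 0\<close> \<open>a j j \<noteq> 0\<close> by (simp add: field_simps)
qed

lemma inverse_entry_bound:
  fixes a g :: "'a \<Rightarrow> 'a \<Rightarrow> real"
  assumes K: "finite K" "i \<in> K" "j \<in> K"
    and sym: "\<And>i j. i \<in> K \<Longrightarrow> j \<in> K \<Longrightarrow> a i j = a j i"
    and "0 < c" and coercive: "\<And>x. c * (\<Sum>i\<in>K. x i^2) \<le> bilinear_form K a x x"
    and off: "\<And>i j. i \<in> K \<Longrightarrow> j \<in> K \<Longrightarrow> i \<noteq> j \<Longrightarrow> \<bar>a i j\<bar> \<le> M" and "0 \<le> M"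
    and diag: "\<And>i. i \<in> K \<Longrightarrow> \<delta> \<le> a i i" and "0 < \<delta>"
    and right_inv: "\<And>i j. i \<in> K \<Longrightarrow> j \<in> K \<Longrightarrow> (\<Sum>t\<in>K. a i t * g t j) = (if i = j then 1 else 0)"
    and left_inv: "\<And>i j. i \<in> K \<Longrightarrow> j \<in> K \<Longrightarrow> (\<Sum>t\<in>K. g i t * a t j) = (if i = j then 1 else 0)"
  shows "\<bar>g i j - (if i = j then 1 / a i i else 0)\<bar> \<le> (M + real (card K) * M^2 / c) / \<delta>^2"
proof -
  let ?Q = "bilinear_form K g (offdiag a i) (\<lambda>p. offdiag a p j)"
  have offdiag_le: "\<bar>offdiag a l p\<bar> \<le> M" if "l \<in> K" "p \<in> K" for l p
    using off[OF that] \<open>0 \<le> M\<close> by (simp add: offdiag_def)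
  have offdiag_sq_le: "offdiag a l p^2 \<le> M^2" if "l \<in> K" "p \<in> K" for l p
    using offdiag_le[OF that] \<open>0 \<le> M\<close> abs_le_square_iff[of "offdiag a l p" M] by simp
  have "(\<Sum>l\<in>K. offdiag a i l^2) \<le> real (card K) * M^2" "(\<Sum>p\<in>K. offdiag a p j^2) \<le> real (card K) * M^2"
    using sum_bounded_above[of K "\<lambda>l. offdiag a i l^2" "M^2"] sum_bounded_above[of K "\<lambda>p. offdiag a p j^2" "M^2"]
      offdiag_sq_le K by auto
  then have "\<bar>?Q\<bar> \<le> real (card K) * M^2 / c"
    using bilinear_form_inverse_le[OF K(1) sym \<open>0 < c\<close> coercive right_inv, of "offdiag a i" "\<lambda>p. offdiag a p j"]
      \<open>0 < c\<close> by (simp add: field_simps)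
  then have numerator: "\<bar>?Q - offdiag a i j\<bar> \<le> M + real (card K) * M^2 / c"
    using offdiag_le[OF K(2,3)] by linarith
  have denominator: "\<delta>^2 \<le> a i i * a j j"
    unfolding power2_eq_square
    by (intro mult_mono) (use diag[OF K(2)] diag[OF K(3)] \<open>0 < \<delta>\<close> in auto)
  have "0 < a i i" "0 < a j j"
    using diag[OF K(2)] diag[OF K(3)] \<open>0 < \<delta>\<close> by linarith+
  then have "\<bar>g i j - (if i = j then 1 / a i i else 0)\<bar> = \<bar>?Q - offdiag a i j\<bar> / (a i i * a j j)"
    by (subst inverse_entry_perturbation[OF K _ _ right_inv left_inv]) (auto simp: abs_divide abs_mult)
  also have "\<dots> \<le> (M + real (card K) * M^2 / c) / \<delta>^2"
    using \<open>0 < \<delta>\<close> by (intro frac_le numerator denominator order_trans[OF abs_ge_zero numerator]) simp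
  finally show ?thesis .
qed

lemma diag_ge_of_dominant:
  assumes "finite K" "i \<in> K"
    and off: "\<And>j. j \<in> K \<Longrightarrow> j \<noteq> i \<Longrightarrow> m \<le> a i j"
    and diag: "(\<Sum>j\<in>K - {i}. a i j) + d \<le> a i i"
  shows "(real (card K) - 1) * m + d \<le> a i i"
proof -
  have "real (card (K - {i})) * m \<le> (\<Sum>j\<in>K - {i}. a i j)"
    by (rule sum_bounded_below) (use off in auto)
  moreover have "1 \<le> card K"
    using assms(1,2) by (auto simp: Suc_le_eq card_gt_0_iff)
  ultimately show ?thesis
    using diag assms(1,2) by (simp add: of_nat_diff)
qed

lemma invertible_mat_if_coercive:
  fixes A :: "real mat"
  assumes A: "A \<in> carrier_mat k k" and "0 < c"
    and coercive: "\<And>x. c * (\<Sum>i\<in>{0..<k}. x i^2) \<le> bilinear_form {0..<k} (\<lambda>i j. A $$ (i,j)) x x"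
  shows "invertible_mat A"
proof -
  have "det A \<noteq> 0"
  proof
    assume "det A = 0"
    then obtain v where v: "v \<in> carrier_vec k" "v \<noteq> 0\<^sub>v k" "A *\<^sub>v v = 0\<^sub>v k"
      using det_0_iff_vec_prod_zero[OF A] by auto
    have "bilinear_form {0..<k} (\<lambda>i j. A $$ (i,j)) (($) v) (($) v) = (\<Sum>i\<in>{0..<k}. v $ i * (A *\<^sub>v v) $ i)"
      unfolding bilinear_form_def using A v(1)
      by (intro sum.cong refl) (simp add: scalar_prod_def sum_distrib_left mult_ac)
    then have "c * (\<Sum>i\<in>{0..<k}. (v $ i)^2) \<le> 0"
      using coercive[of "($) v"] v(3) by simp
    then have "(\<Sum>i\<in>{0..<k}. (v $ i)^2) = 0"
      using \<open>0 < c\<close> sum_nonneg[of "{0..<k}" "\<lambda>i. (v $ i)^2"] by (simp add: mult_le_0_iff)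
    then have "v = 0\<^sub>v k"
      using v(1) by (intro eq_vecI) (auto simp: sum_nonneg_eq_0_iff)
    with v(2) show False ..
  qed
  from det_non_zero_imp_unit[OF A this, of "()"]
  obtain B where "B \<in> carrier_mat k k" "B * A = 1\<^sub>m k" "A * B = 1\<^sub>m k"
    unfolding Units_def ring_mat_def by auto
  then show ?thesis
    using A unfolding invertible_mat_def inverts_mat_def by auto
qed

lemma mat_inv_mult:
  assumes A: "A \<in> carrier_mat k k" and "invertible_mat A"
  shows "mat_inv A \<in> carrier_mat k k" "A * mat_inv A = 1\<^sub>m k" "mat_inv A * A = 1\<^sub>m k"
proof -
  have "inverts_mat A (mat_inv A) \<and> inverts_mat (mat_inv A) A"
    unfolding mat_inv_def
    by (rule someI_ex) (use \<open>invertible_mat A\<close> in \<open>auto simp: invertible_mat_def\<close>)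
  then have right: "A * mat_inv A = 1\<^sub>m k" and left: "mat_inv A * A = 1\<^sub>m (dim_row (mat_inv A))"
    using A unfolding inverts_mat_def by auto
  have "dim_col (mat_inv A) = k" "dim_row (mat_inv A) = k"
    using arg_cong[OF right, of dim_col] arg_cong[OF left, of dim_col] A by auto
  with right left show "mat_inv A \<in> carrier_mat k k" "A * mat_inv A = 1\<^sub>m k" "mat_inv A * A = 1\<^sub>m k"
    by auto
qed

lemma max_norm_le:
  assumes "J \<in> carrier_mat k k" "0 < k"
    and "\<And>i j. i < k \<Longrightarrow> j < k \<Longrightarrow> \<bar>J $$ (i,j)\<bar> \<le> \<beta>"
  shows "max_norm J \<le> \<beta>"
proof -
  have "{\<bar>J $$ (i,j)\<bar> | i j. i < dim_row J \<and> j < dim_col J} = (\<lambda>(i,j). \<bar>J $$ (i,j)\<bar>) ` ({0..<k} \<times> {0..<k})"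
    using assms(1) by auto blast
  then show ?thesis
    unfolding max_norm_def using assms by (subst Max_le_iff) auto
qed

lemma inverse_minus_inv_diag_le:
  fixes A :: "real mat"
  assumes A: "A \<in> carrier_mat k k" and "0 < k" "k \<le> n" "3 \<le> n" "0 < m" "m \<le> M"
    and sym: "\<And>i j. i < k \<Longrightarrow> j < k \<Longrightarrow> A $$ (i,j) = A $$ (j,i)"
    and off: "\<And>i j. i < k \<Longrightarrow> j < k \<Longrightarrow> i \<noteq> j \<Longrightarrow> m \<le> A $$ (i,j) \<and> A $$ (i,j) \<le> M"
    and diag: "\<And>i. i < k \<Longrightarrow> (\<Sum>j\<in>{0..<k} - {i}. A $$ (i,j)) + real (n - k) * m \<le> A $$ (i,i)"
  shows "invertible_mat A
    \<and> max_norm (mat_inv A - inv_diag A) \<le> (M + real n * M^2 / (m * (real n - 2))) / ((real n - 1) * m)^2"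
proof -
  let ?K = "{0..<k}" and ?a = "\<lambda>i j. A $$ (i,j)" and ?c = "m * (real n - 2)"
  have "0 < ?c"
    using \<open>3 \<le> n\<close> \<open>0 < m\<close> by simp
  have coercive: "?c * (\<Sum>i\<in>?K. x i^2) \<le> bilinear_form ?K ?a x x" for x
    using bilinear_form_ge_diag_dominant[of ?K ?a m "real (n - k) * m" x] sym off diag \<open>0 < m\<close> \<open>k \<le> n\<close>
    by (simp add: of_nat_diff algebra_simps)
  then have inv: "invertible_mat A"
    by (rule invertible_mat_if_coercive[OF A \<open>0 < ?c\<close>])
  define G where "G = mat_inv A"
  have G: "G \<in> carrier_mat k k" "A * G = 1\<^sub>m k" "G * A = 1\<^sub>m k"
    unfolding G_def by (rule mat_inv_mult[OF A inv])+
  have right_inv: "(\<Sum>t\<in>?K. ?a i t * G $$ (t,j)) = (if i = j then 1 else 0)" if "i \<in> ?K" "j \<in> ?K" for i j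
    using arg_cong[OF G(2), of "\<lambda>B. B $$ (i,j)"] that A G(1) by (simp add: scalar_prod_def)
  have left_inv: "(\<Sum>t\<in>?K. G $$ (i,t) * ?a t j) = (if i = j then 1 else 0)" if "i \<in> ?K" "j \<in> ?K" for i j
    using arg_cong[OF G(3), of "\<lambda>B. B $$ (i,j)"] that A G(1) by (simp add: scalar_prod_def)
  have diag_ge: "(real n - 1) * m \<le> ?a i i" if "i \<in> ?K" for i
    using diag_ge_of_dominant[of ?K i m ?a "real (n - k) * m"] that off diag \<open>k \<le> n\<close>
    by (simp add: of_nat_diff algebra_simps)
  have off_abs: "\<bar>?a i j\<bar> \<le> M" if "i < k" "j < k" "i \<noteq> j" for i j
    using off[OF that] \<open>0 < m\<close> by auto
  have "max_norm (G - inv_diag A) \<le> (M + real n * M^2 / ?c) / ((real n - 1) * m)^2"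
  proof (rule max_norm_le[OF _ \<open>0 < k\<close>])
    show "G - inv_diag A \<in> carrier_mat k k"
      using A by (intro minus_carrier_mat) (simp add: inv_diag_def)
    fix i j assume "i < k" "j < k"
    have "\<bar>G $$ (i,j) - (if i = j then 1 / ?a i i else 0)\<bar> \<le> (M + real k * M^2 / ?c) / ((real n - 1) * m)^2"
      by (rule inverse_entry_bound[OF _ _ _ _ \<open>0 < ?c\<close> coercive _ _ diag_ge _ right_inv left_inv,
            simplified card_atLeastLessThan diff_zero])
        (use \<open>i < k\<close> \<open>j < k\<close> sym off_abs \<open>0 < m\<close> \<open>m \<le> M\<close> \<open>3 \<le> n\<close> in auto)
    also have "\<dots> \<le> (M + real n * M^2 / ?c) / ((real n - 1) * m)^2"
      using \<open>k \<le> n\<close> \<open>0 < ?c\<close> by (intro divide_right_mono add_left_mono mult_right_mono) auto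
    finally show "\<bar>(G - inv_diag A) $$ (i,j)\<bar> \<le> (M + real n * M^2 / ?c) / ((real n - 1) * m)^2"
      using \<open>i < k\<close> \<open>j < k\<close> A G(1) by (simp add: inv_diag_def)
  qed
  with inv show ?thesis
    unfolding G_def by simp
qed

lemma lower_block_index:
  "i < n - r \<Longrightarrow> j < n - r \<Longrightarrow> lower_block n r V $$ (i,j) = V $$ (i + r, j + r)"
  by (simp add: lower_block_def)

lemma lower_block_0: "V \<in> carrier_mat n n \<Longrightarrow> lower_block n 0 V = V"
  by (auto simp: lower_block_def)

lemma lower_block_diag_ge:
  assumes V: "in_L n m M V" and "r < n" "i < n - r"
  shows "(\<Sum>j\<in>{0..<n - r} - {i}. lower_block n r V $$ (i,j)) + real r * m \<le> lower_block n r V $$ (i,i)"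
proof -
  let ?v = "\<lambda>j. V $$ (i + r, j)"
  have "?v (i + r) = (\<Sum>j\<in>{0..<n} - {i + r}. ?v j)"
    using V assms(3) by (simp add: in_L_def)
  also have "\<dots> = (\<Sum>j\<in>{0..<r}. ?v j) + (\<Sum>j\<in>{0..<n - r}. ?v (j + r)) - ?v (i + r)"
    using sum.atLeastLessThan_concat[of 0 r n ?v] sum.shift_bounds_nat_ivl[of ?v 0 r "n - r"] assms(2,3)
    by (simp add: sum_diff1)
  also have "\<dots> = (\<Sum>j\<in>{0..<r}. ?v j) + (\<Sum>j\<in>{0..<n - r} - {i}. lower_block n r V $$ (i,j))"
    using assms(3) by (simp add: sum_diff1 lower_block_index)
  finally have "lower_block n r V $$ (i,i)
      = (\<Sum>j\<in>{0..<r}. ?v j) + (\<Sum>j\<in>{0..<n - r} - {i}. lower_block n r V $$ (i,j))"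
    using assms(3) by (simp add: lower_block_index)
  moreover have "real r * m \<le> (\<Sum>j\<in>{0..<r}. ?v j)"
    using sum_bounded_below[of "{0..<r}" m ?v] V assms(3) by (simp add: in_L_def)
  ultimately show ?thesis
    by linarith
qed

lemma lower_block_inverse_minus_inv_diag_le:
  assumes V: "in_L n m M V" and sym: "transpose_mat V = V"
    and "3 \<le> n" "0 < m" "m \<le> M" "r < n"
  shows "invertible_mat (lower_block n r V)
    \<and> max_norm (mat_inv (lower_block n r V) - inv_diag (lower_block n r V))
      \<le> (M + real n * M^2 / (m * (real n - 2))) / ((real n - 1) * m)^2"
proof (rule inverse_minus_inv_diag_le)
  have V_sym: "V $$ (i,j) = V $$ (j,i)" if "i < n" "j < n" for i j
  proof -
    have "V \<in> carrier_mat n n"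
      using V by (simp add: in_L_def)
    then show ?thesis
      using arg_cong[OF sym, of "\<lambda>B. B $$ (j,i)"] that by simp
  qed
  show "lower_block n r V $$ (i,j) = lower_block n r V $$ (j,i)" if "i < n - r" "j < n - r" for i j
    using that by (simp add: lower_block_index V_sym)
  show "m \<le> lower_block n r V $$ (i,j) \<and> lower_block n r V $$ (i,j) \<le> M"
    if "i < n - r" "j < n - r" "i \<noteq> j" for i j
    using that V by (simp add: lower_block_index in_L_def)
  show "(\<Sum>j\<in>{0..<n - r} - {i}. lower_block n r V $$ (i,j)) + real (n - (n - r)) * m
      \<le> lower_block n r V $$ (i,i)" if "i < n - r" for i
    using lower_block_diag_ge[OF V \<open>r < n\<close> that] \<open>r < n\<close> by simp
qed (use assms in \<open>auto simp: lower_block_def\<close>)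

theorem lemma2:
  fixes n r :: nat and b c :: real and V :: "real mat"
  assumes "n \<ge> 3"
    and "0 < 1 / b" and "1 / b \<le> 1 / c"
    and "in_L n (1 / b) (1 / c) V"
    and "transpose_mat V = V"
    and "1 \<le> r" and "r \<le> n - 1"
  shows "invertible_mat V \<and> invertible_mat (lower_block n r V) \<and>
    max (max_norm (mat_inv V - inv_diag V))
        (max_norm (mat_inv (lower_block n r V) - inv_diag (lower_block n r V)))
      \<le> 2 * b^2 / (c * (real n - 1)^2) * (real n * b / (2 * (real n - 2) * c) + 1 / 2)"
proof -
  have "0 < 1 / c"
    using assms(2,3) by (rule order_less_le_trans)
  then have "c > 0" "b > 0"
    using assms(2) by simp_all
  have bound: "(1 / c + real n * (1 / c)^2 / (1 / b * (real n - 2))) / ((real n - 1) * (1 / b))^2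
      = 2 * b^2 / (c * (real n - 1)^2) * (real n * b / (2 * (real n - 2) * c) + 1 / 2)"
  proof -
    have "real n - 1 > 0" "real n - 2 > 0"
      using \<open>n \<ge> 3\<close> by auto
    then show ?thesis
      using \<open>b > 0\<close> \<open>c > 0\<close> by (simp add: field_simps) (simp add: algebra_simps power2_eq_square)
  qed
  have "V = lower_block n 0 V"
    using assms(4) by (simp add: in_L_def lower_block_0)
  then show ?thesis
    using lower_block_inverse_minus_inv_diag_le[OF assms(4,5,1,2,3), of 0]
      lower_block_inverse_minus_inv_diag_le[OF assms(4,5,1,2,3), of r] assms(6,7) bound
    by (simp del: lower_block_0)
qed

end
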